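(* Let $p$ be a prime and $a,b,c\ge0$ integers with $a,b<p$ and $c\le a+b$. (1) If $c\ge b$, then $f(a,b,c)=t^{c-b}f(b,a,a+b-c)$. (2) If $a+b-(p-1)\le c\le p-1\le a+b$, then $$f(a,b,c)=(-1)^{a+c}(t-1)^{a+b-(p-1)}\,f\big(c-(a+b)+(p-1),\ (p-1)-c,\ (p-1)-b\big).$$
   Context: For non-negative integers $a,b,c$, $f(a,b,c)\in\overline{\mathbb{F}}_p[t]$ is $f(a,b,c)=\sum_{i_2+i_3=c}\binom{a}{i_2}\binom{b}{i_3}t^{i_2}$ (binomial coefficients reduced mod $p$, $\binom{n}{i}=0$ for $i<0$ or $i>n$). *)

theory Defs
  imports Main "HOL-Computational_Algebra.Polynomial"
begin

definition fpoly :: "nat \<Rightarrow> nat \<Rightarrow> nat \<Rightarrow> 'a::comm_ring_1 poly" where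
  "fpoly a b c = (\<Sum>i\<le>c. monom (of_nat ((a choose i) * (b choose (c - i)))) i)"

end

theory Submission
  imports Defs
begin

text \<open>
  Part (1) is a reindexing of coefficients using the symmetry of binomial coefficients.
  For part (2), first let \<open>a + b = p - 1\<close>. Modulo \<open>p\<close> we have
  \<open>binom(p - 1 - a, v) = (-1)^v binom(a + v, v)\<close>, so up to sign the coefficient of \<open>t^i\<close> in
  \<open>f(a, b, c)\<close> becomes the trinomial coefficient of \<open>(i, a - i, c - i)\<close>, which is symmetric
  in \<open>a\<close> and \<open>c\<close>; this gives \<open>f(a, b, c) = \<plusminus>f(c, p - 1 - c, a)\<close>. The general case follows
  by induction on the excess \<open>a + b - (p - 1)\<close>: Pascal's rule in the second argument splits the
  left-hand side, and the two resulting right-hand sides differ by \<open>(t - 1) f(\<dots>)\<close>, again by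
  Pascal's rule.
\<close>

lemma coeff_fpoly:
  "coeff (fpoly a b c :: 'a::comm_ring_1 poly) i =
     (if i \<le> c then of_nat ((a choose i) * (b choose (c - i))) else 0)"
  by (simp add: fpoly_def coeff_sum coeff_monom)

lemma fpoly_Suc_Suc_left:
  "(fpoly (Suc a) b (Suc c) :: 'a::comm_ring_1 poly) = fpoly a b (Suc c) + [:0, 1:] * fpoly a b c"
proof (rule poly_eqI)
  fix i
  show "coeff (fpoly (Suc a) b (Suc c) :: 'a poly) i = coeff (fpoly a b (Suc c) + [:0, 1:] * fpoly a b c) i"
    by (cases i)
       (auto simp: coeff_fpoly mult_pCons_left algebra_simps Suc_diff_le simp flip: of_nat_add of_nat_mult)
qed

lemma fpoly_Suc_Suc_right:
  "(fpoly a (Suc b) (Suc c) :: 'a::comm_ring_1 poly) = fpoly a b (Suc c) + fpoly a b c"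
proof (rule poly_eqI)
  fix i
  have "Suc c - i = Suc (c - i)" if "i \<le> c" using that by simp
  then show "coeff (fpoly a (Suc b) (Suc c) :: 'a poly) i = coeff (fpoly a b (Suc c) + fpoly a b c) i"
    by (cases "i \<le> c") (auto simp: coeff_fpoly algebra_simps simp flip: of_nat_add of_nat_mult)
qed

lemma fpoly_Suc_left_minus_Suc_right:
  "(fpoly (Suc a) b (Suc c) - fpoly a (Suc b) (Suc c) :: 'a::comm_ring_1 poly) = [:-1, 1:] * fpoly a b c"
proof -
  have "[:-1, 1:] = ([:0, 1:] - 1 :: 'a poly)"
    by (simp add: one_pCons)
  then show ?thesis
    by (simp add: fpoly_Suc_Suc_left fpoly_Suc_Suc_right algebra_simps)
qed

lemma fpoly_eq_monom_mult_fpoly_swap: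
  assumes "b \<le> c" "c \<le> a + b"
  shows "(fpoly a b c :: 'a::comm_ring_1 poly) = monom 1 (c - b) * fpoly b a (a + b - c)"
proof (rule poly_eqI)
  fix n
  show "coeff (fpoly a b c :: 'a poly) n = coeff (monom 1 (c - b) * fpoly b a (a + b - c)) n"
  proof (cases "c - b \<le> n \<and> n \<le> c \<and> n \<le> a")
    case True
    define j where "j = n - (c - b)"
    have j: "j \<le> a + b - c" "b - j = c - n" "a + b - c - j = a - n" "j \<le> b"
      using True assms unfolding j_def by auto
    have "b choose j = b choose (c - n)"
      using binomial_symmetric[OF j(4)] j(2) by simp
    moreover have "a choose (a - n) = a choose n"
      using binomial_symmetric[of n a] True by simp
    ultimately show ?thesis
      using True j by (simp add: coeff_fpoly coeff_monom_mult j_def[symmetric] mult.commute)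
  next
    case False
    then show ?thesis
      using assms by (auto simp: coeff_fpoly coeff_monom_mult binomial_eq_0)
  qed
qed

lemma of_nat_choose_CHAR_complement:
  fixes k n :: nat
  assumes "CHAR('a::field) = p" "k + n + 1 = p" "j < p"
  shows "(of_nat (n choose j) :: 'a) = (-1) ^ j * of_nat ((k + j) choose j)"
  using assms(3)
proof (induction j)
  case 0
  then show ?case by simp
next
  case (Suc j)
  have "\<not> p dvd Suc j"
    using Suc.prems by (auto dest: dvd_imp_le)
  then have Suc_j_nonzero: "(of_nat (Suc j) :: 'a) \<noteq> 0"
    using assms(1) by (metis of_nat_eq_0_iff_char_dvd)
  \<comment> \<open>\<open>n - j \<equiv> -(k + j + 1) (mod p)\<close>, unless \<open>n choose j = 0\<close>\<close>
  have shift: "(of_nat (n - j) :: 'a) * of_nat (n choose j) = - of_nat (k + j + 1) * of_nat (n choose j)"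
  proof (cases "j \<le> n")
    case True
    then have "(of_nat (n - j) :: 'a) + of_nat (k + j + 1) = of_nat p"
      using assms(2) by (metis add.assoc add.commute le_add_diff_inverse2 of_nat_add)
    also have "\<dots> = 0"
      using assms(1) by (metis of_nat_CHAR)
    finally have "(of_nat (n - j) :: 'a) = - of_nat (k + j + 1)"
      by (metis eq_neg_iff_add_eq_0)
    then show ?thesis by simp
  next
    case False
    then show ?thesis by (simp add: binomial_eq_0)
  qed
  have "of_nat (Suc j) * (of_nat (n choose Suc j) :: 'a) = of_nat (n - j) * of_nat (n choose j)"
    by (metis binomial_absorption binomial_absorb_comp of_nat_mult)
  also have "\<dots> = - of_nat (k + j + 1) * ((-1) ^ j * of_nat ((k + j) choose j))"
    using shift Suc by simp
  also have "\<dots> = of_nat (Suc j) * ((-1) ^ Suc j * of_nat ((k + Suc j) choose Suc j))"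
  proof -
    have "(k + j + 1) * ((k + j) choose j) = Suc j * ((k + Suc j) choose Suc j)"
      using Suc_times_binomial[of j "k + j"] by simp
    then have "(of_nat (k + j + 1) :: 'a) * of_nat ((k + j) choose j) =
        of_nat (Suc j) * of_nat ((k + Suc j) choose Suc j)"
      by (metis of_nat_mult)
    then show ?thesis
      by (simp add: algebra_simps)
  qed
  finally show ?case
    using Suc_j_nonzero by (metis mult_left_cancel)
qed

lemma choose_mult_choose_swap:
  "(i + u choose i) * (i + u + v choose v) = (i + v choose i) * (i + v + u choose u)"
proof -
  have "i + u + v choose v = u + v + i choose (u + i)"
    using binomial_symmetric[of v "u + v + i"] by (simp add: ac_simps)
  moreover have "i + v + u choose u = v + u + i choose (v + i)"
    using binomial_symmetric[of u "v + u + i"] by (simp add: ac_simps)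
  moreover have "u + v choose u = v + u choose v"
    using binomial_symmetric[of u "u + v"] by (simp add: ac_simps)
  ultimately show ?thesis
    using choose_mult_lemma[of u v i] choose_mult_lemma[of v u i] by (simp add: ac_simps)
qed

lemma coeff_neg_one_power_mult:
  "coeff ((-1) ^ n * q :: 'a::comm_ring_1 poly) i = (-1) ^ n * coeff q i"
  by (cases "even n") simp_all

lemma fpoly_CHAR_reflect_base:
  assumes "CHAR('a::field) = p" "prime p" "a + b = p - 1" "c \<le> p - 1"
  shows "(fpoly a b c :: 'a poly) = (-1) ^ (a + c) * fpoly c (p - 1 - c) a"
proof (rule poly_eqI)
  fix i
  have "p > 1"
    using assms(2) prime_gt_1_nat by blast
  show "coeff (fpoly a b c :: 'a poly) i = coeff ((-1) ^ (a + c) * fpoly c (p - 1 - c) a) i"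
  proof (cases "i \<le> c \<and> i \<le> a")
    case False
    then show ?thesis
      by (auto simp: coeff_neg_one_power_mult coeff_fpoly binomial_eq_0)
  next
    case True
    define u where "u = a - i"
    define v where "v = c - i"
    have a: "a = i + u" and c: "c = i + v"
      using True u_def v_def by auto
    have b_choose: "(of_nat (b choose v) :: 'a) = (-1) ^ v * of_nat ((a + v) choose v)"
      using of_nat_choose_CHAR_complement[OF assms(1)] assms \<open>p > 1\<close> c by auto
    have c_choose: "(of_nat ((p - 1 - c) choose u) :: 'a) = (-1) ^ u * of_nat ((c + u) choose u)"
      using of_nat_choose_CHAR_complement[OF assms(1)] assms \<open>p > 1\<close> a c by auto
    have sign: "(-1 :: 'a) ^ (a + c) * (-1) ^ u = (-1) ^ v"
    proof -
      have "a + c + u = v + 2 * (i + u)"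
        using a c by simp
      then have "(-1 :: 'a) ^ (a + c + u) = (-1) ^ v"
        by (simp add: power_add power_mult)
      then show ?thesis
        by (simp add: power_add)
    qed
    have "coeff (fpoly a b c :: 'a poly) i = of_nat (a choose i) * of_nat (b choose v)"
      using True by (simp add: coeff_fpoly v_def)
    also have "\<dots> = (-1) ^ v * of_nat ((a choose i) * ((a + v) choose v))"
      by (simp add: b_choose)
    also have "\<dots> = (-1) ^ (a + c) * (-1) ^ u * of_nat ((c choose i) * ((c + u) choose u))"
    proof -
      have "(a choose i) * ((a + v) choose v) = (c choose i) * ((c + u) choose u)"
        using choose_mult_choose_swap[of i u v] a c by (simp add: ac_simps)
      then show ?thesis
        by (simp add: sign)
    qed
    also have "\<dots> = (-1) ^ (a + c) * (of_nat (c choose i) * of_nat ((p - 1 - c) choose u))"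
      using c_choose by simp
    also have "\<dots> = coeff ((-1) ^ (a + c) * fpoly c (p - 1 - c) a) i"
      using True by (simp add: coeff_neg_one_power_mult coeff_fpoly u_def)
    finally show ?thesis .
  qed
qed

lemma fpoly_CHAR_reflect:
  assumes "CHAR('a::field) = p" "prime p"
  shows "a + b = (p - 1) + N \<Longrightarrow> a < p \<Longrightarrow> b < p \<Longrightarrow> N \<le> c \<Longrightarrow> c \<le> p - 1 \<Longrightarrow>
    (fpoly a b c :: 'a poly) =
      (-1) ^ (a + c) * [:-1, 1:] ^ N * fpoly (c + (p - 1) - (a + b)) ((p - 1) - c) ((p - 1) - b)"
proof (induction N arbitrary: b c)
  case 0
  then have "c + (p - 1) - (a + b) = c" "p - 1 - b = a"
    by auto
  then show ?case
    using fpoly_CHAR_reflect_base[OF assms, of a b c] 0 by simp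
next
  case (Suc N)
  obtain b' where b: "b = Suc b'"
    using Suc.prems by (cases b) auto
  obtain c' where c: "c = Suc c'"
    using Suc.prems by (cases c) auto
  define \<alpha> \<beta> \<gamma> where "\<alpha> = c' - N" and "\<beta> = p - 1 - c" and "\<gamma> = p - 1 - b"
  define s :: "'a poly" where "s = (-1) ^ (a + c)"
  have params: "c + (p - 1) - (a + b) = \<alpha>" "Suc c' + (p - 1) - (a + b') = Suc \<alpha>"
      "c' + (p - 1) - (a + b') = \<alpha>" "p - 1 - Suc c' = \<beta>" "p - 1 - c' = Suc \<beta>"
      "p - 1 - b' = Suc \<gamma>"
    using Suc.prems b c unfolding \<alpha>_def \<beta>_def \<gamma>_def by auto
  have IH_Suc: "(fpoly a b' (Suc c') :: 'a poly) = s * [:-1, 1:] ^ N * fpoly (Suc \<alpha>) \<beta> (Suc \<gamma>)"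
  proof -
    have "(fpoly a b' (Suc c') :: 'a poly) = (-1) ^ (a + Suc c') * [:-1, 1:] ^ N
        * fpoly (Suc c' + (p - 1) - (a + b')) (p - 1 - Suc c') (p - 1 - b')"
      by (rule Suc.IH) (use Suc.prems b c in auto)
    then show ?thesis
      unfolding params s_def c .
  qed
  have IH: "(fpoly a b' c' :: 'a poly) = - s * [:-1, 1:] ^ N * fpoly \<alpha> (Suc \<beta>) (Suc \<gamma>)"
  proof -
    have "(fpoly a b' c' :: 'a poly) = (-1) ^ (a + c') * [:-1, 1:] ^ N
        * fpoly (c' + (p - 1) - (a + b')) (p - 1 - c') (p - 1 - b')"
      by (rule Suc.IH) (use Suc.prems b c in auto)
    then show ?thesis
      unfolding params s_def c by simp
  qed
  have "(fpoly a b c :: 'a poly) = fpoly a b' (Suc c') + fpoly a b' c'"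
    unfolding b c by (rule fpoly_Suc_Suc_right)
  also have "\<dots> = s * [:-1, 1:] ^ N * (fpoly (Suc \<alpha>) \<beta> (Suc \<gamma>) - fpoly \<alpha> (Suc \<beta>) (Suc \<gamma>))"
    unfolding IH_Suc IH by (simp add: algebra_simps)
  also have "\<dots> = s * [:-1, 1:] ^ Suc N * fpoly \<alpha> \<beta> \<gamma>"
    unfolding fpoly_Suc_left_minus_Suc_right power_Suc2 by (simp only: mult.assoc)
  finally show ?case
    unfolding params(1) \<beta>_def \<gamma>_def s_def .
qed

theorem lemmaA4:
  fixes p a b c :: nat
  assumes "prime p" and "CHAR('a::field) = p"
    and "a < p" and "b < p" and "c \<le> a + b"
  shows "(b \<le> c \<longrightarrow>
           (fpoly a b c :: 'a poly) = monom 1 (c - b) * fpoly b a (a + b - c))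
       \<and> (a + b - (p - 1) \<le> c \<and> c \<le> p - 1 \<and> p - 1 \<le> a + b \<longrightarrow>
           (fpoly a b c :: 'a poly) =
             (-1) ^ (a + c) * [:-1, 1:] ^ (a + b - (p - 1))
             * fpoly (c + (p - 1) - (a + b)) ((p - 1) - c) ((p - 1) - b))"
proof (intro conjI impI)
  assume "b \<le> c"
  then show "(fpoly a b c :: 'a poly) = monom 1 (c - b) * fpoly b a (a + b - c)"
    using fpoly_eq_monom_mult_fpoly_swap assms(5) by blast
next
  assume range: "a + b - (p - 1) \<le> c \<and> c \<le> p - 1 \<and> p - 1 \<le> a + b"
  then have "a + b = (p - 1) + (a + b - (p - 1))"
    by simp
  from fpoly_CHAR_reflect[OF assms(2,1) this assms(3,4)] range
  show "(fpoly a b c :: 'a poly) = (-1) ^ (a + c) * [:-1, 1:] ^ (a + b - (p - 1))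
      * fpoly (c + (p - 1) - (a + b)) ((p - 1) - c) ((p - 1) - b)"
    by blast
qed

end
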